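(* Let $\Sigma$ be an alphabet with $|\Sigma|\ge 2$ and let $W\subseteq\Sigma^*$ be any finite set of words. Then there exist minimized DFAs $D$ and $D'$ over $\Sigma$ with $F(D)=F(D')=\varnothing$ and $L(D)\triangle L(D')=W$.
   Context: All DFAs are complete and all states are reachable; a DFA is \emph{minimized} if it is the minimal DFA for its language. For a DFA $D$ with start state $q_0$ and transition function $\delta$, the finite part $F(D)$ is the set of states $r$ such that $\{w\in\Sigma^*:\delta(q_0,w)=r\}$ is finite. *)

theory Defs
  imports Main
begin

record ('q, 'a) dfa =
  states :: "'q set"
  start  :: 'q
  delta  :: "'q \<Rightarrow> 'a \<Rightarrow> 'q"
  accept :: "'q set"

definition delta_hat :: "('q, 'a) dfa \<Rightarrow> 'q \<Rightarrow> 'a list \<Rightarrow> 'q" where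
  "delta_hat D q w = foldl (delta D) q w"

definition is_dfa :: "'a set \<Rightarrow> ('q, 'a) dfa \<Rightarrow> bool" where
  "is_dfa Al D \<longleftrightarrow>
     finite (states D) \<and> start D \<in> states D \<and> accept D \<subseteq> states D \<and>
     (\<forall>q\<in>states D. \<forall>a\<in>Al. delta D q a \<in> states D) \<and>
     (\<forall>q\<in>states D. \<exists>w\<in>lists Al. delta_hat D (start D) w = q)"

definition lang :: "'a set \<Rightarrow> ('q, 'a) dfa \<Rightarrow> 'a list set" where
  "lang Al D = {w \<in> lists Al. delta_hat D (start D) w \<in> accept D}"

text \<open>Every finite DFA is
  isomorphic to one whose states are natural numbers, so comparing against nat-state
  DFAs is comparing against all DFAs.\<close>
definition minimized :: "'a set \<Rightarrow> ('q, 'a) dfa \<Rightarrow> bool" where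
  "minimized Al D \<longleftrightarrow> is_dfa Al D \<and>
     (\<forall>D' :: (nat, 'a) dfa. is_dfa Al D' \<and> lang Al D' = lang Al D
        \<longrightarrow> card (states D) \<le> card (states D'))"

definition finite_part :: "'a set \<Rightarrow> ('q, 'a) dfa \<Rightarrow> 'q set" where
  "finite_part Al D =
     {r \<in> states D. finite {w \<in> lists Al. delta_hat D (start D) w = r}}"

end

theory Submission
  imports Defs
begin

text \<open>
  Fix letters \<open>a \<noteq> b\<close> and a block length \<open>N\<close> exceeding the length of every word in \<open>W\<close>.
  The automaton \<open>block_dfa Al W a N m\<close> buffers the input in blocks of \<open>N\<close> letters and keeps a flag
  recording whether the last completed block ended in a letter other than \<open>a\<close>; before the first
  block is complete the flag is the initial value \<open>m\<close>. It accepts when the flag is off and the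
  buffer holds a word of \<open>W\<close>. Only words shorter than \<open>N\<close> ever see \<open>m\<close>, so the automata for
  \<open>m = False\<close> and \<open>m = True\<close> disagree exactly on \<open>W\<close>. Every state \<open>(p, c)\<close> is reached by
  \<open>x\<^bsup>kN\<^esup> p\<close> for all \<open>k \<ge> 1\<close> with \<open>x \<in> {a, b}\<close> chosen according to \<open>c\<close>, so there is no finite
  part. Finally, every automaton maps onto the Nerode automaton of residual languages of its
  language by a surjective homomorphism, and such a map cannot create a state with only
  finitely many access words.
\<close>

lemma delta_hat_Nil [simp]: "delta_hat D q [] = q"
  by (simp add: delta_hat_def)

lemma delta_hat_Cons [simp]: "delta_hat D q (x # w) = delta_hat D (delta D q x) w"
  by (simp add: delta_hat_def)

lemma delta_hat_append: "delta_hat D q (u @ v) = delta_hat D (delta_hat D q u) v"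
  by (simp add: delta_hat_def)

lemma delta_hat_in_states:
  assumes "is_dfa Al D" "w \<in> lists Al" "q \<in> states D"
  shows "delta_hat D q w \<in> states D"
  using assms(2,3) by (induction w arbitrary: q) (use assms(1) in \<open>auto simp: is_dfa_def\<close>)

lemma run_image_eq_states:
  assumes D: "is_dfa Al D"
  shows "delta_hat D (start D) ` lists Al = states D"
proof
  show "delta_hat D (start D) ` lists Al \<subseteq> states D"
    using D delta_hat_in_states[OF D] by (auto simp: is_dfa_def)
  show "states D \<subseteq> delta_hat D (start D) ` lists Al"
    using D by (force simp: is_dfa_def)
qed

lemma infinite_if_unbounded_length:
  assumes "\<And>n. \<exists>w\<in>S. n \<le> length w"
  shows "infinite (S :: 'a list set)"
  using assms finite_maxlen by (metis not_le)

definition access_words :: "'a set \<Rightarrow> ('q, 'a) dfa \<Rightarrow> 'q \<Rightarrow> 'a list set" where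
  "access_words Al D q = {w \<in> lists Al. delta_hat D (start D) w = q}"

lemma finite_part_eq_access_words:
  "finite_part Al D = {q \<in> states D. finite (access_words Al D q)}"
  by (simp add: finite_part_def access_words_def)

subsection \<open>Surjective homomorphisms of automata\<close>

definition dfa_hom :: "'a set \<Rightarrow> ('q, 'a) dfa \<Rightarrow> ('p, 'a) dfa \<Rightarrow> ('q \<Rightarrow> 'p) \<Rightarrow> bool" where
  "dfa_hom Al D E h \<longleftrightarrow>
     states E = h ` states D \<and> start E = h (start D) \<and> accept E \<subseteq> states E \<and>
     (\<forall>q\<in>states D. \<forall>x\<in>Al. delta E (h q) x = h (delta D q x)) \<and>
     (\<forall>q\<in>states D. h q \<in> accept E \<longleftrightarrow> q \<in> accept D)"

lemma dfa_hom_delta_hat: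
  assumes "is_dfa Al D" "dfa_hom Al D E h" "w \<in> lists Al" "q \<in> states D"
  shows "delta_hat E (h q) w = h (delta_hat D q w)"
  using assms(3,4)
proof (induction w arbitrary: q)
  case (Cons x w)
  then have "delta D q x \<in> states D" and "delta E (h q) x = h (delta D q x)"
    using assms(1,2) by (auto simp: is_dfa_def dfa_hom_def)
  with Cons show ?case by simp
qed simp

lemma dfa_hom_run:
  assumes "is_dfa Al D" "dfa_hom Al D E h" "w \<in> lists Al"
  shows "delta_hat E (start E) w = h (delta_hat D (start D) w)"
  using dfa_hom_delta_hat[OF assms] assms(1,2) by (simp add: is_dfa_def dfa_hom_def)

lemma dfa_hom_is_dfa:
  assumes D: "is_dfa Al D" and h: "dfa_hom Al D E h"
  shows "is_dfa Al E"
  unfolding is_dfa_def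
proof (intro conjI ballI)
  show "finite (states E)" "start E \<in> states E" "accept E \<subseteq> states E"
    using D h by (auto simp: is_dfa_def dfa_hom_def)
next
  fix q' x assume "q' \<in> states E" "x \<in> Al"
  then obtain q where "q \<in> states D" "q' = h q"
    using h by (auto simp: dfa_hom_def)
  with \<open>x \<in> Al\<close> show "delta E q' x \<in> states E"
    using D h by (auto simp: is_dfa_def dfa_hom_def)
next
  fix q' assume "q' \<in> states E"
  then have "q' \<in> h ` delta_hat D (start D) ` lists Al"
    using h run_image_eq_states[OF D] by (simp add: dfa_hom_def)
  then obtain w where "w \<in> lists Al" "q' = h (delta_hat D (start D) w)"
    by blast
  then show "\<exists>w\<in>lists Al. delta_hat E (start E) w = q'"
    using dfa_hom_run[OF D h] by auto
qed

lemma dfa_hom_lang: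
  assumes D: "is_dfa Al D" and h: "dfa_hom Al D E h"
  shows "lang Al E = lang Al D"
proof -
  have "delta_hat E (start E) w \<in> accept E \<longleftrightarrow> delta_hat D (start D) w \<in> accept D"
    if "w \<in> lists Al" for w
    using that dfa_hom_run[OF D h] delta_hat_in_states[OF D] D h
    by (simp add: is_dfa_def dfa_hom_def)
  then show ?thesis by (auto simp: lang_def)
qed

lemma dfa_hom_access_words:
  assumes "is_dfa Al D" "dfa_hom Al D E h"
  shows "access_words Al D q \<subseteq> access_words Al E (h q)"
  using dfa_hom_run[OF assms] by (auto simp: access_words_def)

lemma dfa_hom_finite_part_empty:
  assumes D: "is_dfa Al D" and h: "dfa_hom Al D E h" and fp: "finite_part Al D = {}"
  shows "finite_part Al E = {}"
proof -
  have "infinite (access_words Al E (h q))" if "q \<in> states D" for q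
    using fp that dfa_hom_access_words[OF D h] finite_subset
    unfolding finite_part_eq_access_words by blast
  with h show ?thesis
    unfolding finite_part_eq_access_words dfa_hom_def by auto
qed

subsection \<open>The Nerode automaton\<close>

definition residual :: "'a set \<Rightarrow> 'a list set \<Rightarrow> 'a list \<Rightarrow> 'a list set" where
  "residual Al L u = {v \<in> lists Al. u @ v \<in> L}"

definition state_lang :: "'a set \<Rightarrow> ('q, 'a) dfa \<Rightarrow> 'q \<Rightarrow> 'a list set" where
  "state_lang Al D q = {v \<in> lists Al. delta_hat D q v \<in> accept D}"

definition nerode_dfa :: "'a set \<Rightarrow> 'a list set \<Rightarrow> ('a list set, 'a) dfa" where
  "nerode_dfa Al L =
     \<lparr>states = residual Al L ` lists Al, start = residual Al L [],
      delta = (\<lambda>R x. {v \<in> lists Al. x # v \<in> R}),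
      accept = {R \<in> residual Al L ` lists Al. [] \<in> R}\<rparr>"

lemma residual_lang:
  assumes "u \<in> lists Al"
  shows "residual Al (lang Al D) u = state_lang Al D (delta_hat D (start D) u)"
  using assms by (simp add: residual_def state_lang_def lang_def delta_hat_append)

lemma residuals_eq_state_langs:
  assumes D: "is_dfa Al D"
  shows "residual Al (lang Al D) ` lists Al = state_lang Al D ` states D"
proof -
  have "residual Al (lang Al D) ` lists Al =
      state_lang Al D ` delta_hat D (start D) ` lists Al"
    unfolding image_image by (rule image_cong) (simp_all add: residual_lang)
  with run_image_eq_states[OF D] show ?thesis by simp
qed

lemma dfa_hom_nerode_dfa:
  assumes D: "is_dfa Al D"
  shows "dfa_hom Al D (nerode_dfa Al (lang Al D)) (state_lang Al D)"
  unfolding dfa_hom_def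
proof (intro conjI ballI)
  let ?Q = "nerode_dfa Al (lang Al D)"
  show states: "states ?Q = state_lang Al D ` states D"
    using residuals_eq_state_langs[OF D] by (simp add: nerode_dfa_def)
  show "start ?Q = state_lang Al D (start D)"
    using residual_lang[of "[]"] by (simp add: nerode_dfa_def)
  show "accept ?Q \<subseteq> states ?Q"
    by (auto simp: nerode_dfa_def)
  show "delta ?Q (state_lang Al D q) x = state_lang Al D (delta D q x)" if "x \<in> Al" for q x
    using that by (auto simp: nerode_dfa_def state_lang_def)
  show "state_lang Al D q \<in> accept ?Q \<longleftrightarrow> q \<in> accept D" if "q \<in> states D" for q
  proof -
    have "state_lang Al D q \<in> states ?Q" using that states by simp
    then show ?thesis by (simp add: nerode_dfa_def state_lang_def)
  qed
qed

lemma card_nerode_dfa_le: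
  assumes "is_dfa Al D"
  shows "card (states (nerode_dfa Al (lang Al D))) \<le> card (states D)"
proof -
  have "finite (states D)" using assms by (simp add: is_dfa_def)
  then show ?thesis
    using residuals_eq_state_langs[OF assms] by (simp add: nerode_dfa_def card_image_le)
qed

subsection \<open>Minimal automata with natural-number states\<close>

definition rename :: "('q \<Rightarrow> 'p) \<Rightarrow> ('q, 'a) dfa \<Rightarrow> ('p, 'a) dfa" where
  "rename f D =
     \<lparr>states = f ` states D, start = f (start D),
      delta = (\<lambda>q x. f (delta D (the_inv_into (states D) f q) x)), accept = f ` accept D\<rparr>"

lemma dfa_hom_rename:
  assumes "is_dfa Al D" "inj_on f (states D)"
  shows "dfa_hom Al D (rename f D) f"
  using assms
  by (auto simp: dfa_hom_def rename_def is_dfa_def the_inv_into_f_f inj_on_image_mem_iff)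

lemma exists_minimized_nat_dfa:
  assumes D: "is_dfa Al D" and fp: "finite_part Al D = {}"
  shows "\<exists>M :: (nat, 'a) dfa. minimized Al M \<and> finite_part Al M = {} \<and> lang Al M = lang Al D"
proof -
  define Q where "Q = nerode_dfa Al (lang Al D)"
  have hQ: "dfa_hom Al D Q (state_lang Al D)"
    unfolding Q_def by (rule dfa_hom_nerode_dfa[OF D])
  have Q: "is_dfa Al Q" by (rule dfa_hom_is_dfa[OF D hQ])
  obtain f :: "'a list set \<Rightarrow> nat" where f: "inj_on f (states Q)"
    using finite_imp_inj_to_nat_seg Q by (metis is_dfa_def)
  define M where "M = rename f Q"
  have hM: "dfa_hom Al Q M f"
    unfolding M_def by (rule dfa_hom_rename[OF Q f])
  have M: "is_dfa Al M" by (rule dfa_hom_is_dfa[OF Q hM])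
  have LM: "lang Al M = lang Al D"
    using dfa_hom_lang[OF Q hM] dfa_hom_lang[OF D hQ] by simp
  have "card (states M) \<le> card (states D')"
    if "is_dfa Al D'" "lang Al D' = lang Al M" for D' :: "(nat, 'a) dfa"
  proof -
    have "card (states M) = card (states Q)"
      using f by (simp add: M_def rename_def card_image)
    also have "\<dots> \<le> card (states D')"
      using card_nerode_dfa_le[OF that(1)] that(2) LM by (simp add: Q_def)
    finally show ?thesis .
  qed
  then have "minimized Al M"
    using M by (simp add: minimized_def)
  moreover have "finite_part Al M = {}"
    using dfa_hom_finite_part_empty[OF Q hM dfa_hom_finite_part_empty[OF D hQ fp]] .
  ultimately show ?thesis using LM by blast
qed

subsection \<open>Block automata\<close>

definition block_step :: "'a \<Rightarrow> nat \<Rightarrow> 'a list \<times> bool \<Rightarrow> 'a \<Rightarrow> 'a list \<times> bool" where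
  "block_step a N = (\<lambda>(p, c) x. if Suc (length p) < N then (p @ [x], c) else ([], x \<noteq> a))"

definition block_dfa :: "'a set \<Rightarrow> 'a list set \<Rightarrow> 'a \<Rightarrow> nat \<Rightarrow> bool \<Rightarrow> ('a list \<times> bool, 'a) dfa" where
  "block_dfa Al W a N m =
     \<lparr>states = {p \<in> lists Al. length p < N} \<times> UNIV, start = ([], m),
      delta = block_step a N, accept = W \<times> {False}\<rparr>"

lemma foldl_block_step_partial:
  "length p + length w < N \<Longrightarrow> foldl (block_step a N) (p, c) w = (p @ w, c)"
  by (induction w arbitrary: p) (auto simp: block_step_def)

lemma foldl_block_step_complete:
  "w \<noteq> [] \<Longrightarrow> length p + length w = N \<Longrightarrow> foldl (block_step a N) (p, c) w = ([], last w \<noteq> a)"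
proof (induction w arbitrary: p)
  case (Cons x w)
  show ?case
  proof (cases "w = []")
    case True
    with Cons.prems show ?thesis by (simp add: block_step_def)
  next
    case False
    then have "Suc (length p) < N"
      using Cons.prems(2) by (cases w) auto
    then have "block_step a N (p, c) x = (p @ [x], c)"
      by (simp add: block_step_def)
    with Cons.IH[OF False] Cons.prems False show ?thesis by simp
  qed
qed simp

lemma foldl_block_step_replicate:
  assumes "0 < N"
  shows "foldl (block_step a N) ([], c) (replicate (Suc k * N) x) = ([], x \<noteq> a)"
proof (induction k arbitrary: c)
  case 0
  show ?case using foldl_block_step_complete[of "replicate N x" "[]" N] assms by simp
next
  case (Suc k)
  have "replicate (Suc (Suc k) * N) x = replicate N x @ replicate (Suc k * N) x"
    by (simp add: replicate_add[symmetric])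
  with Suc foldl_block_step_complete[of "replicate N x" "[]" N] assms show ?case by simp
qed

lemma foldl_block_step_forgets_flag:
  assumes "0 < N" "N \<le> length w"
  shows "foldl (block_step a N) ([], c) w = foldl (block_step a N) ([], c') w"
proof -
  have "take N w \<noteq> []" using assms by (cases w) auto
  then have "foldl (block_step a N) ([], d) (take N w) = ([], last (take N w) \<noteq> a)" for d
    using foldl_block_step_complete[of "take N w" "[]" N] assms by simp
  then show ?thesis
    by (metis append_take_drop_id foldl_append)
qed

lemma block_dfa_simps [simp]:
  "states (block_dfa Al W a N m) = {p \<in> lists Al. length p < N} \<times> UNIV"
  "start (block_dfa Al W a N m) = ([], m)"
  "delta (block_dfa Al W a N m) = block_step a N"
  "accept (block_dfa Al W a N m) = W \<times> {False}"
  by (simp_all add: block_dfa_def)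

lemma delta_hat_block_dfa [simp]:
  "delta_hat (block_dfa Al W a N m) q w = foldl (block_step a N) q w"
  by (simp add: delta_hat_def)

lemma block_dfa_run_blocks:
  assumes "0 < N" "length p < N"
  shows "delta_hat (block_dfa Al W a N m) (start (block_dfa Al W a N m))
           (replicate (Suc k * N) x @ p) = (p, x \<noteq> a)"
proof -
  have "foldl (block_step a N) ([], m) (replicate (Suc k * N) x) = ([], x \<noteq> a)"
    by (rule foldl_block_step_replicate[OF assms(1)])
  then show ?thesis
    using foldl_block_step_partial[of "[]" p N] assms(2) by simp
qed

locale block_setting =
  fixes Al :: "'a set" and W :: "'a list set" and a b :: 'a and N :: nat
  assumes finite_Al: "finite Al" and a: "a \<in> Al" and b: "b \<in> Al" "b \<noteq> a"
    and W: "W \<subseteq> lists Al" and N: "0 < N" and short: "\<And>w. w \<in> W \<Longrightarrow> length w < N"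
begin

lemma block_dfa_access_words:
  assumes "(p, c) \<in> states (block_dfa Al W a N m)"
  shows "replicate (Suc k * N) (if c then b else a) @ p \<in> access_words Al (block_dfa Al W a N m) (p, c)"
proof -
  let ?x = "if c then b else a"
  have p: "p \<in> lists Al" "length p < N" using assms by auto
  have "delta_hat (block_dfa Al W a N m) (start (block_dfa Al W a N m)) (replicate (Suc k * N) ?x @ p)
      = (p, ?x \<noteq> a)"
    by (rule block_dfa_run_blocks[OF N p(2)])
  with p a b show ?thesis by (auto simp: access_words_def)
qed

lemma is_dfa_block_dfa: "is_dfa Al (block_dfa Al W a N m)"
  unfolding is_dfa_def
proof (intro conjI ballI)
  have "finite {p \<in> lists Al. length p < N}"
    by (rule finite_subset[OF _ finite_lists_length_le[OF finite_Al, of N]]) auto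
  then show "finite (states (block_dfa Al W a N m))" by simp
  show "start (block_dfa Al W a N m) \<in> states (block_dfa Al W a N m)"
    using N by simp
  show "accept (block_dfa Al W a N m) \<subseteq> states (block_dfa Al W a N m)"
    using W short by auto
next
  fix q x assume "q \<in> states (block_dfa Al W a N m)" "x \<in> Al"
  then show "delta (block_dfa Al W a N m) q x \<in> states (block_dfa Al W a N m)"
    by (cases q) (auto simp: block_step_def)
next
  fix q assume q: "q \<in> states (block_dfa Al W a N m)"
  obtain p c where "q = (p, c)" by (cases q)
  with q block_dfa_access_words[of p c m 0]
  show "\<exists>w\<in>lists Al. delta_hat (block_dfa Al W a N m) (start (block_dfa Al W a N m)) w = q"
    unfolding access_words_def by blast
qed

lemma finite_part_block_dfa: "finite_part Al (block_dfa Al W a N m) = {}"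
proof -
  have "infinite (access_words Al (block_dfa Al W a N m) (p, c))"
    if "(p, c) \<in> states (block_dfa Al W a N m)" for p c
  proof (rule infinite_if_unbounded_length)
    fix n
    have "n \<le> Suc n * N" using N by (cases N) auto
    then show "\<exists>w\<in>access_words Al (block_dfa Al W a N m) (p, c). n \<le> length w"
      using block_dfa_access_words[OF that, of n] by force
  qed
  then show ?thesis by (auto simp: finite_part_eq_access_words)
qed

lemma block_dfa_accepts_short:
  assumes "length w < N"
  shows "w \<in> lang Al (block_dfa Al W a N m) \<longleftrightarrow> w \<in> W \<and> \<not> m"
  using foldl_block_step_partial[of "[]" w N a m] assms W by (auto simp: lang_def)

lemma block_dfa_accepts_long:
  assumes "N \<le> length w"
  shows "w \<in> lang Al (block_dfa Al W a N m) \<longleftrightarrow> w \<in> lang Al (block_dfa Al W a N m')"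
  using foldl_block_step_forgets_flag[OF N assms, of a m m'] by (simp add: lang_def)

lemma lang_block_dfa_False:
  "lang Al (block_dfa Al W a N False) = lang Al (block_dfa Al W a N True) \<union> W"
proof (intro set_eqI)
  fix w
  show "w \<in> lang Al (block_dfa Al W a N False) \<longleftrightarrow> w \<in> lang Al (block_dfa Al W a N True) \<union> W"
  proof (cases "length w < N")
    case True
    then show ?thesis
      using block_dfa_accepts_short[OF True, of False] block_dfa_accepts_short[OF True, of True]
      by simp
  next
    case False
    then have "w \<notin> W" using short by force
    with False show ?thesis using block_dfa_accepts_long[of w False True] by simp
  qed
qed

lemma lang_block_dfa_True_disjoint: "lang Al (block_dfa Al W a N True) \<inter> W = {}"
proof -
  have "w \<notin> lang Al (block_dfa Al W a N True)" if "w \<in> W" for w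
    using block_dfa_accepts_short[OF short[OF that], of True] by simp
  then show ?thesis by blast
qed

end

theorem mainTheorem11:
  fixes Al :: "'a set" and W :: "'a list set"
  assumes "finite Al" and "card Al \<ge> 2"
    and "W \<subseteq> lists Al" and "finite W"
  shows "\<exists>(D :: (nat, 'a) dfa) (D' :: (nat, 'a) dfa).
           minimized Al D \<and> minimized Al D' \<and>
           finite_part Al D = {} \<and> finite_part Al D' = {} \<and>
           (lang Al D - lang Al D') \<union> (lang Al D' - lang Al D) = W"
proof -
  obtain a b where ab: "a \<in> Al" "b \<in> Al" "b \<noteq> a"
  proof -
    have "\<not> card Al \<le> Suc 0" using assms(2) by simp
    then show ?thesis using that card_le_Suc0_iff_eq[OF assms(1)] by blast
  qed
  obtain n where "\<forall>w\<in>W. length w < n"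
    using finite_maxlen[OF assms(4)] by blast
  then interpret block_setting Al W a b "Suc n"
    using assms(1,3) ab by unfold_locales auto
  obtain D :: "(nat, 'a) dfa" where D: "minimized Al D" "finite_part Al D = {}"
    "lang Al D = lang Al (block_dfa Al W a (Suc n) False)"
    using exists_minimized_nat_dfa[OF is_dfa_block_dfa finite_part_block_dfa] by blast
  obtain D' :: "(nat, 'a) dfa" where D': "minimized Al D'" "finite_part Al D' = {}"
    "lang Al D' = lang Al (block_dfa Al W a (Suc n) True)"
    using exists_minimized_nat_dfa[OF is_dfa_block_dfa finite_part_block_dfa] by blast
  have "(lang Al D - lang Al D') \<union> (lang Al D' - lang Al D) = W"
    using lang_block_dfa_False lang_block_dfa_True_disjoint unfolding D(3) D'(3) by blast
  with D D' show ?thesis by blast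
qed

end
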